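(* Let $\iota:B\to A$ be a central homomorphism of monoids, i.e. $B$ is commutative and $\iota(b)a=a\iota(b)$ for all $a\in A$, $b\in B$. Then: (1) a map $q:A\to B$ satisfies (ZL1), (ZL2), (ZL3) if and only if $q$ is a monoid homomorphism with $q\circ\iota=\mathrm{id}_B$; (2) any two such maps $q,q'$ that are equivalent (i.e. there is an invertible $b_0\in B$ with $q(a)b_0=q'(a\,\iota(b_0))$ for all $a\in A$) are equal; hence the canonical surjection $\mathcal Z^1(\mathsf T^l_\iota,(B,m_B))\to\mathsf{Desc}^1(\mathsf T^l_\iota,(B,m_B))$ is a bijection.
   Context: Let $\iota:B\to A$ be a monoid homomorphism. $\mathcal Z^1(\mathsf T^l_\iota,(B,m_B))$ is identified with the set of maps $q:A\to B$ satisfying (ZL1) $q(1_A)=1_B$; (ZL2) $q(\iota(b)a)=b\,q(a)$ for all $a\in A,b\in B$; (ZL3) $q(aa')=q(a\,\iota(q(a')))$ for all $a,a'\in A$. (These are exactly the Eilenberg–Moore algebra structures on the left $B$-set $B$ for the monad $A\otimes_B-$ on left $B$-sets induced by $\iota$, via $h\mapsto(a\mapsto h(a\otimes 1_B))$.) Two elements $q,q'$ are equivalent if there is an invertible $b_0\in B$ with $q(a)b_0=q'(a\,\iota(b_0))$ for all $a\in A$ (equivalently, the corresponding algebras are isomorphic); $\mathsf{Desc}^1(\mathsf T^l_\iota,(B,m_B))$ is the set of equivalence classes. *)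

theory Defs
  imports "HOL-Algebra.Group" "HOL-Library.FuncSet"
begin

text \<open>Monoid homomorphisms (HOL-Algebra's hom does not require preservation of the unit).\<close>
definition mon_hom :: "('a, 'c) monoid_scheme \<Rightarrow> ('b, 'd) monoid_scheme \<Rightarrow> ('a \<Rightarrow> 'b) set" where
  "mon_hom G H = {h. h \<in> hom G H \<and> h \<one>\<^bsub>G\<^esub> = \<one>\<^bsub>H\<^esub>}"

definition ZL :: "('a, 'c) monoid_scheme \<Rightarrow> ('b, 'd) monoid_scheme \<Rightarrow> ('b \<Rightarrow> 'a) \<Rightarrow> ('a \<Rightarrow> 'b) \<Rightarrow> bool" where
  "ZL A B \<iota> q \<longleftrightarrow>
     q \<in> carrier A \<rightarrow> carrier B \<and>
     q \<one>\<^bsub>A\<^esub> = \<one>\<^bsub>B\<^esub> \<and>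
     (\<forall>a\<in>carrier A. \<forall>b\<in>carrier B. q (\<iota> b \<otimes>\<^bsub>A\<^esub> a) = b \<otimes>\<^bsub>B\<^esub> q a) \<and>
     (\<forall>a\<in>carrier A. \<forall>a'\<in>carrier A. q (a \<otimes>\<^bsub>A\<^esub> a') = q (a \<otimes>\<^bsub>A\<^esub> \<iota> (q a')))"

definition Z1 :: "('a, 'c) monoid_scheme \<Rightarrow> ('b, 'd) monoid_scheme \<Rightarrow> ('b \<Rightarrow> 'a) \<Rightarrow> ('a \<Rightarrow> 'b) set" where
  "Z1 A B \<iota> = {q \<in> carrier A \<rightarrow>\<^sub>E carrier B. ZL A B \<iota> q}"

definition ZL_equiv :: "('a, 'c) monoid_scheme \<Rightarrow> ('b, 'd) monoid_scheme \<Rightarrow> ('b \<Rightarrow> 'a) \<Rightarrow> ('a \<Rightarrow> 'b) \<Rightarrow> ('a \<Rightarrow> 'b) \<Rightarrow> bool" where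
  "ZL_equiv A B \<iota> q q' \<longleftrightarrow>
     (\<exists>b0\<in>Units B. \<forall>a\<in>carrier A. q a \<otimes>\<^bsub>B\<^esub> b0 = q' (a \<otimes>\<^bsub>A\<^esub> \<iota> b0))"

definition ZL_rel :: "('a, 'c) monoid_scheme \<Rightarrow> ('b, 'd) monoid_scheme \<Rightarrow> ('b \<Rightarrow> 'a) \<Rightarrow> (('a \<Rightarrow> 'b) \<times> ('a \<Rightarrow> 'b)) set" where
  "ZL_rel A B \<iota> = {(q, q'). q \<in> Z1 A B \<iota> \<and> q' \<in> Z1 A B \<iota> \<and> ZL_equiv A B \<iota> q q'}"

definition Desc1 :: "('a, 'c) monoid_scheme \<Rightarrow> ('b, 'd) monoid_scheme \<Rightarrow> ('b \<Rightarrow> 'a) \<Rightarrow> ('a \<Rightarrow> 'b) set set" where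
  "Desc1 A B \<iota> = Z1 A B \<iota> // ZL_rel A B \<iota>"

end

theory Submission
  imports Defs
begin

text \<open>For central \<iota>, (ZL3) together with (ZL2) gives
  q(a a') = q(a \<iota>(q a')) = q(\<iota>(q a') a) = q a' \<cdot> q a, so q is multiplicative, and
  (ZL2) at a = 1 makes q a retraction of \<iota>. Conversely a multiplicative retraction
  satisfies (ZL1)-(ZL3) for any \<iota>. A retraction q' that is a homomorphism turns
  q a \<cdot> b0 = q'(a \<iota>(b0)) into q a \<cdot> b0 = q' a \<cdot> b0, and b0 is a unit, so
  equivalent elements of Z1 coincide and the quotient map is injective.\<close>

lemma ZL_retraction:
  assumes "monoid A" "monoid B" "\<iota> \<in> carrier B \<rightarrow> carrier A"
    and "ZL A B \<iota> q" "b \<in> carrier B"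
  shows "q (\<iota> b) = b"
proof -
  interpret A: monoid A by fact
  interpret B: monoid B by fact
  have "q (\<iota> b) = q (\<iota> b \<otimes>\<^bsub>A\<^esub> \<one>\<^bsub>A\<^esub>)"
    using assms(3,5) by (simp add: Pi_iff)
  also have "\<dots> = b \<otimes>\<^bsub>B\<^esub> q \<one>\<^bsub>A\<^esub>"
    using assms(4,5) by (simp add: ZL_def)
  finally show ?thesis
    using assms(4,5) by (simp add: ZL_def)
qed

lemma ZL_mult_central:
  assumes "comm_monoid B" "\<iota> \<in> carrier B \<rightarrow> carrier A"
    and central: "\<forall>a\<in>carrier A. \<forall>b\<in>carrier B. \<iota> b \<otimes>\<^bsub>A\<^esub> a = a \<otimes>\<^bsub>A\<^esub> \<iota> b"
    and "ZL A B \<iota> q" "a \<in> carrier A" "a' \<in> carrier A"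
  shows "q (a \<otimes>\<^bsub>A\<^esub> a') = q a \<otimes>\<^bsub>B\<^esub> q a'"
proof -
  interpret B: comm_monoid B by fact
  have q_closed: "q x \<in> carrier B" if "x \<in> carrier A" for x
    using assms(4) that by (auto simp: ZL_def)
  have "q (a \<otimes>\<^bsub>A\<^esub> a') = q (a \<otimes>\<^bsub>A\<^esub> \<iota> (q a'))"
    using assms(4-6) by (simp add: ZL_def)
  also have "\<dots> = q (\<iota> (q a') \<otimes>\<^bsub>A\<^esub> a)"
    using central assms(2,5,6) q_closed by auto
  also have "\<dots> = q a' \<otimes>\<^bsub>B\<^esub> q a"
    using assms(4-6) q_closed by (simp add: ZL_def)
  finally show ?thesis
    using B.m_comm q_closed assms(5,6) by simp
qed

lemma ZL_if_retraction_mon_hom: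
  assumes "\<iota> \<in> carrier B \<rightarrow> carrier A" "q \<in> mon_hom A B"
    and retraction: "\<forall>b\<in>carrier B. q (\<iota> b) = b"
  shows "ZL A B \<iota> q"
  using assms by (auto simp: ZL_def mon_hom_def hom_def Pi_iff)

lemma ZL_iff_retraction_mon_hom:
  assumes "monoid A" "comm_monoid B" "\<iota> \<in> carrier B \<rightarrow> carrier A"
    and central: "\<forall>a\<in>carrier A. \<forall>b\<in>carrier B. \<iota> b \<otimes>\<^bsub>A\<^esub> a = a \<otimes>\<^bsub>A\<^esub> \<iota> b"
  shows "ZL A B \<iota> q \<longleftrightarrow> q \<in> mon_hom A B \<and> (\<forall>b\<in>carrier B. q (\<iota> b) = b)"
proof
  assume ZL: "ZL A B \<iota> q"
  have "q \<in> mon_hom A B"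
    using ZL ZL_mult_central[OF assms(2-4) ZL] by (auto simp: ZL_def mon_hom_def hom_def)
  moreover have "\<forall>b\<in>carrier B. q (\<iota> b) = b"
    using ZL_retraction[OF assms(1) comm_monoid.axioms(1)[OF assms(2)] assms(3) ZL] by blast
  ultimately show "q \<in> mon_hom A B \<and> (\<forall>b\<in>carrier B. q (\<iota> b) = b)" ..
next
  assume "q \<in> mon_hom A B \<and> (\<forall>b\<in>carrier B. q (\<iota> b) = b)"
  then show "ZL A B \<iota> q"
    using ZL_if_retraction_mon_hom[OF assms(3)] by blast
qed

lemma ZL_equiv_imp_eq:
  assumes "monoid B" "\<iota> \<in> carrier B \<rightarrow> carrier A" "q \<in> carrier A \<rightarrow> carrier B"
    and "q' \<in> mon_hom A B" "\<forall>b\<in>carrier B. q' (\<iota> b) = b"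
    and "ZL_equiv A B \<iota> q q'" "a \<in> carrier A"
  shows "q a = q' a"
proof -
  interpret B: monoid B by fact
  obtain b0 where b0: "b0 \<in> Units B"
    and twist: "\<forall>a\<in>carrier A. q a \<otimes>\<^bsub>B\<^esub> b0 = q' (a \<otimes>\<^bsub>A\<^esub> \<iota> b0)"
    using assms(6) by (auto simp: ZL_equiv_def)
  have b0_closed: "b0 \<in> carrier B"
    using b0 by blast
  have "q a \<otimes>\<^bsub>B\<^esub> b0 = q' (a \<otimes>\<^bsub>A\<^esub> \<iota> b0)"
    using twist assms(7) by blast
  also have "\<dots> = q' a \<otimes>\<^bsub>B\<^esub> b0"
    using assms(2,4,5,7) b0_closed by (auto simp: mon_hom_def hom_def Pi_iff)
  finally have "q a \<otimes>\<^bsub>B\<^esub> b0 = q' a \<otimes>\<^bsub>B\<^esub> b0" .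
  moreover have "q a \<in> carrier B" "q' a \<in> carrier B"
    using assms(3,4,7) by (auto simp: mon_hom_def hom_def)
  ultimately show ?thesis
    using b0 B.Units_r_inv B.Units_inv_closed
    by (metis B.m_assoc B.r_one b0_closed)
qed

lemma ZL_rel_refl:
  assumes "monoid A" "monoid B" "\<iota> \<one>\<^bsub>B\<^esub> = \<one>\<^bsub>A\<^esub>" "q \<in> Z1 A B \<iota>"
  shows "(q, q) \<in> ZL_rel A B \<iota>"
proof -
  interpret A: monoid A by fact
  interpret B: monoid B by fact
  have "\<forall>a\<in>carrier A. q a \<otimes>\<^bsub>B\<^esub> \<one>\<^bsub>B\<^esub> = q (a \<otimes>\<^bsub>A\<^esub> \<iota> \<one>\<^bsub>B\<^esub>)"
    using assms(3,4) by (auto simp: Z1_def ZL_def Pi_iff)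
  then show ?thesis
    using assms(4) by (auto simp: ZL_rel_def ZL_equiv_def intro!: bexI[of _ "\<one>\<^bsub>B\<^esub>"])
qed

lemma bij_betw_Image_quotient:
  assumes refl: "\<And>x. x \<in> S \<Longrightarrow> (x, x) \<in> r"
    and discrete: "\<And>x y. (x, y) \<in> r \<Longrightarrow> x = y"
  shows "bij_betw (\<lambda>x. r `` {x}) S (S // r)"
proof (rule bij_betw_imageI)
  show "inj_on (\<lambda>x. r `` {x}) S"
  proof (rule inj_onI)
    fix x y assume "x \<in> S" "r `` {x} = r `` {y}"
    then have "(y, x) \<in> r"
      using refl by blast
    then show "x = y"
      by (rule discrete[symmetric])
  qed
qed (auto simp: quotient_def)

theorem proposition3p9:
  fixes A :: "('a, 'c) monoid_scheme" and B :: "('b, 'd) monoid_scheme" and \<iota> :: "'b \<Rightarrow> 'a"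
  assumes "monoid A" and "comm_monoid B"
    and "\<iota> \<in> mon_hom B A"
    and central: "\<forall>a\<in>carrier A. \<forall>b\<in>carrier B. \<iota> b \<otimes>\<^bsub>A\<^esub> a = a \<otimes>\<^bsub>A\<^esub> \<iota> b"
  shows "(\<forall>q. ZL A B \<iota> q \<longleftrightarrow>
              (q \<in> mon_hom A B \<and> (\<forall>b\<in>carrier B. q (\<iota> b) = b)))
    \<and> (\<forall>q q'. ZL A B \<iota> q \<longrightarrow> ZL A B \<iota> q' \<longrightarrow> ZL_equiv A B \<iota> q q'
              \<longrightarrow> (\<forall>a\<in>carrier A. q a = q' a))
    \<and> bij_betw (\<lambda>q. ZL_rel A B \<iota> `` {q}) (Z1 A B \<iota>) (Desc1 A B \<iota>)"
proof -
  have \<iota>_closed: "\<iota> \<in> carrier B \<rightarrow> carrier A" and \<iota>_one: "\<iota> \<one>\<^bsub>B\<^esub> = \<one>\<^bsub>A\<^esub>"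
    using assms(3) by (auto simp: mon_hom_def hom_def)
  have B: "monoid B"
    using assms(2) comm_monoid.axioms(1) by blast
  note ZL_iff = ZL_iff_retraction_mon_hom[OF assms(1,2) \<iota>_closed central]
  have equiv_eq: "\<forall>a\<in>carrier A. q a = q' a"
    if "ZL A B \<iota> q" "ZL A B \<iota> q'" "ZL_equiv A B \<iota> q q'" for q q'
    using that ZL_equiv_imp_eq[OF B \<iota>_closed, of q q'] ZL_iff[of q'] by (auto simp: ZL_def)
  have "(q, q') \<in> ZL_rel A B \<iota> \<Longrightarrow> q = q'" for q q'
    using equiv_eq[of q q'] by (auto simp: ZL_rel_def Z1_def intro: PiE_ext)
  then have "bij_betw (\<lambda>q. ZL_rel A B \<iota> `` {q}) (Z1 A B \<iota>) (Desc1 A B \<iota>)"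
    unfolding Desc1_def
    using bij_betw_Image_quotient ZL_rel_refl[OF assms(1) B, of \<iota>, OF \<iota>_one] by blast
  with ZL_iff equiv_eq show ?thesis
    by blast
qed

end
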